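(* Let $E$ be a finite-dimensional real vector space and $M\subseteq E$ a convex polytope with non-empty interior. If $r>0$ and $\gamma\colon[0,r[\,\to M$ is a $C^1$-map, then there exists $\varepsilon>0$ such that $\gamma(0)+t\gamma'(0)\in M$ for all $t\in[0,\varepsilon]$.
   Context: A convex polytope is the convex hull of a finite set. A map $\gamma\colon[0,r[\,\to E$ is $C^1$ if it is continuous, $C^1$ on $]0,r[$, and $\gamma'$ extends continuously to $[0,r[$ (so $\gamma'(0)$ is this extension's value, equivalently the one-sided derivative at $0$). *)

theory Defs
  imports "HOL-Analysis.Analysis"
begin

end

theory Submission
  imports Defs
begin

text \<open>
  A polytope is a finite intersection of half-spaces \<open>{x. a \<bullet> x \<le> b}\<close>, so it suffices to
  move a short way from \<open>\<gamma> 0\<close> in direction \<open>\<gamma>' 0\<close> inside each of them. This is automatic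
  unless \<open>\<gamma> 0\<close> lies on the bounding hyperplane; then \<open>a \<bullet> \<gamma> t\<close> is maximal at \<open>t = 0\<close>,
  which by the mean value theorem and continuity of \<open>\<gamma>'\<close> at \<open>0\<close> forces \<open>a \<bullet> \<gamma>' 0 \<le> 0\<close>.
\<close>

definition feasible_direction :: "'a::real_vector set \<Rightarrow> 'a \<Rightarrow> 'a \<Rightarrow> bool" where
  "feasible_direction S p v \<longleftrightarrow> (\<exists>\<epsilon>>0. \<forall>t\<in>{0..\<epsilon>}. p + t *\<^sub>R v \<in> S)"

lemma feasible_direction_Int:
  assumes "feasible_direction S p v" and "feasible_direction T p v"
  shows "feasible_direction (S \<inter> T) p v"
proof -
  obtain \<epsilon> \<delta> where "\<epsilon> > 0" "\<forall>t\<in>{0..\<epsilon>}. p + t *\<^sub>R v \<in> S"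
    and "\<delta> > 0" "\<forall>t\<in>{0..\<delta>}. p + t *\<^sub>R v \<in> T"
    using assms by (auto simp: feasible_direction_def)
  then show ?thesis
    unfolding feasible_direction_def by (intro exI[of _ "min \<epsilon> \<delta>"]) auto
qed

lemma feasible_direction_Inter:
  assumes "finite F" and "\<And>S. S \<in> F \<Longrightarrow> feasible_direction S p v"
  shows "feasible_direction (\<Inter>F) p v"
  using assms
proof (induction F rule: finite_induct)
  case empty
  show ?case by (auto simp: feasible_direction_def intro: exI[of _ 1])
next
  case (insert S F)
  then show ?case by (simp add: feasible_direction_Int)
qed

lemma feasible_direction_halfspace_le:
  fixes a p v :: "'a::real_inner"
  assumes "a \<bullet> p \<le> b" and "a \<bullet> p = b \<Longrightarrow> a \<bullet> v \<le> 0"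
  shows "feasible_direction {x. a \<bullet> x \<le> b} p v"
proof (cases "a \<bullet> v \<le> 0")
  case True
  have "a \<bullet> (p + t *\<^sub>R v) \<le> b" if "t \<ge> 0" for t
    using assms(1) mult_nonneg_nonpos[OF that True] by (simp add: inner_add_right)
  then show ?thesis
    unfolding feasible_direction_def by (intro exI[of _ 1]) auto
next
  case False
  then have "a \<bullet> v > 0" and "a \<bullet> p < b"
    using assms by (auto simp: order_le_less)
  define \<epsilon> where "\<epsilon> = (b - a \<bullet> p) / (a \<bullet> v)"
  have "a \<bullet> (p + t *\<^sub>R v) \<le> b" if "t \<in> {0..\<epsilon>}" for t
  proof -
    have "t * (a \<bullet> v) \<le> \<epsilon> * (a \<bullet> v)"
      using that \<open>a \<bullet> v > 0\<close> by (intro mult_right_mono) auto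
    also have "\<dots> = b - a \<bullet> p"
      using \<open>a \<bullet> v > 0\<close> by (simp add: \<epsilon>_def)
    finally show ?thesis by (simp add: inner_add_right)
  qed
  moreover have "\<epsilon> > 0"
    using \<open>a \<bullet> v > 0\<close> \<open>a \<bullet> p < b\<close> by (simp add: \<epsilon>_def)
  ultimately show ?thesis
    unfolding feasible_direction_def by auto
qed

lemma deriv_nonpos_at_left_endpoint_max:
  fixes f g :: "real \<Rightarrow> real"
  assumes "a < b"
    and "continuous_on {a..<b} f"
    and "\<And>t. t \<in> {a<..<b} \<Longrightarrow> (f has_real_derivative g t) (at t)"
    and "continuous (at a within {a..<b}) g"
    and "\<And>t. t \<in> {a..<b} \<Longrightarrow> f t \<le> f a"
  shows "g a \<le> 0"
proof (rule ccontr)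
  assume "\<not> g a \<le> 0"
  then obtain d where "d > 0"
    and g_near: "\<And>t. t \<in> {a..<b} \<Longrightarrow> dist t a < d \<Longrightarrow> dist (g t) (g a) < g a"
    using assms(4) unfolding continuous_within_eps_delta by (meson not_le)
  define t where "t = min (a + d/2) ((a + b)/2)"
  have t: "a < t" "t < b" "t - a < d"
    using \<open>d > 0\<close> \<open>a < b\<close> by (auto simp: t_def min_def)
  have "continuous_on {a..t} f"
    using assms(2) by (rule continuous_on_subset) (use t in auto)
  moreover have "\<And>x. a < x \<Longrightarrow> x < t \<Longrightarrow> (f has_derivative (*) (g x)) (at x)"
    using assms(3) t by (simp add: has_field_derivative_def)
  ultimately obtain z where z: "a < z" "z < t" "f t - f a = g z * (t - a)"
    using mvt[of a t f "\<lambda>x. (*) (g x)"] t by auto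
  have "g z > 0"
    using g_near[of z] z t by (auto simp: dist_real_def)
  then have "f t - f a > 0"
    unfolding z(3) using z(1,2) by simp
  with assms(5)[of t] t show False by auto
qed

lemma C1_path_in_halfspace_inner_deriv_nonpos:
  fixes \<gamma> \<gamma>' :: "real \<Rightarrow> 'a::real_inner"
  assumes "r > 0"
    and "\<gamma> ` {0..<r} \<subseteq> {x. a \<bullet> x \<le> b}"
    and "continuous_on {0..<r} \<gamma>"
    and "\<And>t. t \<in> {0<..<r} \<Longrightarrow> (\<gamma> has_vector_derivative \<gamma>' t) (at t)"
    and "continuous (at 0 within {0..<r}) \<gamma>'"
    and "a \<bullet> \<gamma> 0 = b"
  shows "a \<bullet> \<gamma>' 0 \<le> 0"
proof (rule deriv_nonpos_at_left_endpoint_max[of 0 r "\<lambda>t. a \<bullet> \<gamma> t" "\<lambda>t. a \<bullet> \<gamma>' t"])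
  show "continuous_on {0..<r} (\<lambda>t. a \<bullet> \<gamma> t)"
    using assms(3) by (intro continuous_intros)
  show "continuous (at 0 within {0..<r}) (\<lambda>t. a \<bullet> \<gamma>' t)"
    using assms(5) by (intro continuous_intros)
  show "((\<lambda>t. a \<bullet> \<gamma> t) has_real_derivative a \<bullet> \<gamma>' t) (at t)" if "t \<in> {0<..<r}" for t
    unfolding has_real_derivative_iff_has_vector_derivative
    by (rule bounded_linear.has_vector_derivative[OF bounded_linear_inner_right assms(4)[OF that]])
qed (use assms in \<open>auto simp: image_subset_iff\<close>)

lemma feasible_direction_polyhedron_C1_path:
  fixes \<gamma> \<gamma>' :: "real \<Rightarrow> 'a::euclidean_space"
  assumes "polyhedron M"
    and "r > 0"
    and "\<gamma> ` {0..<r} \<subseteq> M"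
    and "continuous_on {0..<r} \<gamma>"
    and "\<And>t. t \<in> {0<..<r} \<Longrightarrow> (\<gamma> has_vector_derivative \<gamma>' t) (at t)"
    and "continuous (at 0 within {0..<r}) \<gamma>'"
  shows "feasible_direction M (\<gamma> 0) (\<gamma>' 0)"
proof -
  obtain F where "finite F" and M: "M = \<Inter>F"
    and halfspaces: "\<And>h. h \<in> F \<Longrightarrow> \<exists>a b. a \<noteq> 0 \<and> h = {x. a \<bullet> x \<le> b}"
    using assms(1) unfolding polyhedron_def by blast
  have "feasible_direction h (\<gamma> 0) (\<gamma>' 0)" if "h \<in> F" for h
  proof -
    obtain a b where h: "h = {x. a \<bullet> x \<le> b}"
      using halfspaces[OF \<open>h \<in> F\<close>] by blast
    have path_in_h: "\<gamma> ` {0..<r} \<subseteq> {x. a \<bullet> x \<le> b}"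
      using assms(3) M \<open>h \<in> F\<close> h by auto
    show ?thesis
      unfolding h
    proof (rule feasible_direction_halfspace_le)
      show "a \<bullet> \<gamma> 0 \<le> b"
        using path_in_h assms(2) by (auto simp: image_subset_iff)
      show "a \<bullet> \<gamma>' 0 \<le> 0" if "a \<bullet> \<gamma> 0 = b"
        using C1_path_in_halfspace_inner_deriv_nonpos[OF assms(2) path_in_h assms(4-6) that] .
    qed
  qed
  then show ?thesis
    unfolding M by (rule feasible_direction_Inter[OF \<open>finite F\<close>])
qed

theorem lemma5p1:
  fixes M :: "'a::euclidean_space set"
    and \<gamma> \<gamma>' :: "real \<Rightarrow> 'a"
    and r :: real
  assumes "polytope M"
    and "interior M \<noteq> {}"
    and "r > 0"
    and "\<gamma> ` {0..<r} \<subseteq> M"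
    and "continuous_on {0..<r} \<gamma>"
    and "\<And>t. t \<in> {0<..<r} \<Longrightarrow> (\<gamma> has_vector_derivative \<gamma>' t) (at t)"
    and "continuous_on {0..<r} \<gamma>'"
  shows "\<exists>\<epsilon>>0. \<forall>t\<in>{0..\<epsilon>}. \<gamma> 0 + t *\<^sub>R \<gamma>' 0 \<in> M"
proof -
  have "continuous (at 0 within {0..<r}) \<gamma>'"
    using assms(3,7) by (simp add: continuous_on_eq_continuous_within)
  with polytope_imp_polyhedron[OF assms(1)] assms(3-6)
  have "feasible_direction M (\<gamma> 0) (\<gamma>' 0)"
    by (rule feasible_direction_polyhedron_C1_path)
  then show ?thesis
    unfolding feasible_direction_def .
qed

end
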